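(* Let $H$ be a complex Hilbert space and let $P_1, P_2 \in \mathcal{L}(H)$ be orthogonal projections each satisfying the property $\mathcal{AN}^*$. Then $P_1 + P_2$, $P_1 - P_2$, $P_1 P_2$ and $P_2 P_1$ satisfy the property $\mathcal{AN}^*$.
   Context: $\mathcal{L}(H)$ is the space of bounded linear operators on $H$. For a closed subspace $M \neq \{0\}$ of $H$ and $T \in \mathcal{L}(H)$, write $[T|_M] := \inf\{\|Tx\| : x \in M, \|x\|=1\}$; $T|_M$ satisfies $\mathcal{N}^*$ if there is $x_0 \in M$ with $\|x_0\|=1$ and $\|Tx_0\| = [T|_M]$. $T$ satisfies the property $\mathcal{AN}^*$ if $T|_M$ satisfies $\mathcal{N}^*$ for every closed subspace $M \neq \{0\}$ of $H$. *)

theory Defs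
  imports "HOL-Analysis.Analysis"
begin

text \<open>Complex vector spaces, complex inner product spaces and complex Hilbert
  spaces (HOL only provides the real versions), modelled after real_inner.\<close>

class complex_vector = real_vector +
  fixes scaleC :: "complex \<Rightarrow> 'a \<Rightarrow> 'a" (infixr \<open>*\<^sub>C\<close> 75)
  assumes scaleC_add_right: "a *\<^sub>C (x + y) = a *\<^sub>C x + a *\<^sub>C y"
    and scaleC_add_left: "(a + b) *\<^sub>C x = a *\<^sub>C x + b *\<^sub>C x"
    and scaleC_scaleC: "a *\<^sub>C (b *\<^sub>C x) = (a * b) *\<^sub>C x"
    and scaleC_one: "1 *\<^sub>C x = x"
    and scaleR_scaleC: "scaleR r x = complex_of_real r *\<^sub>C x"

class complex_inner = complex_vector + real_normed_vector +
  fixes cinner :: "'a \<Rightarrow> 'a \<Rightarrow> complex"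
  assumes cinner_commute: "cinner x y = cnj (cinner y x)"
    and cinner_add_left: "cinner (x + y) z = cinner x z + cinner y z"
    and cinner_scaleC_left: "cinner (r *\<^sub>C x) y = cnj r * cinner x y"
    and cinner_ge_zero: "0 \<le> Re (cinner x x)"
    and cinner_eq_zero_iff: "cinner x x = 0 \<longleftrightarrow> x = 0"
    and norm_eq_sqrt_cinner: "norm x = sqrt (Re (cinner x x))"

class chilbert_space = complex_inner + complete_space

definition clinear :: "('a::complex_vector \<Rightarrow> 'b::complex_vector) \<Rightarrow> bool" where
  "clinear T \<longleftrightarrow> (\<forall>x y. T (x + y) = T x + T y) \<and> (\<forall>c x. T (c *\<^sub>C x) = c *\<^sub>C T x)"

definition bounded_clinear :: "('a::complex_inner \<Rightarrow> 'b::complex_inner) \<Rightarrow> bool" where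
  "bounded_clinear T \<longleftrightarrow> clinear T \<and> (\<exists>K. \<forall>x. norm (T x) \<le> norm x * K)"

definition orth_proj :: "('a::complex_inner \<Rightarrow> 'a) \<Rightarrow> bool" where
  "orth_proj P \<longleftrightarrow> bounded_clinear P \<and> (\<forall>x. P (P x) = P x)
     \<and> (\<forall>x y. cinner (P x) y = cinner x (P y))"

definition csubspace :: "'a::complex_vector set \<Rightarrow> bool" where
  "csubspace M \<longleftrightarrow> 0 \<in> M \<and> (\<forall>x\<in>M. \<forall>y\<in>M. x + y \<in> M) \<and> (\<forall>c. \<forall>x\<in>M. c *\<^sub>C x \<in> M)"

definition min_modulus_on :: "('a::complex_inner \<Rightarrow> 'a) \<Rightarrow> 'a set \<Rightarrow> real" where
  "min_modulus_on T M = Inf {norm (T x) | x. x \<in> M \<and> norm x = 1}"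

definition property_N_star_on :: "('a::complex_inner \<Rightarrow> 'a) \<Rightarrow> 'a set \<Rightarrow> bool" where
  "property_N_star_on T M \<longleftrightarrow>
     (\<exists>x0\<in>M. norm x0 = 1 \<and> norm (T x0) = min_modulus_on T M)"

definition property_AN_star :: "('a::complex_inner \<Rightarrow> 'a) \<Rightarrow> bool" where
  "property_AN_star T \<longleftrightarrow>
     (\<forall>M. csubspace M \<and> closed M \<and> M \<noteq> {0} \<longrightarrow> property_N_star_on T M)"

end

theory Submission
  imports Defs
begin

text \<open>A projection P with property AN* has finite rank or finite corank. Otherwise there are
  orthonormal sequences e_n in its range and f_n in its kernel; the closed subspace
  M = {y. P y = J (y - P y)} \<inter> (ker P \<inter> {f_n}^\<bottom>)^\<bottom>, where J maps f_n to 2^-n e_n, contains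
  the vectors 2^-n e_n + f_n, so the minimum modulus of P on M is 0, yet P kills no unit vector
  of M.

  Hence there is a finite orthonormal set F, with orthogonal projection Q onto its span, such that
  P1 and P2, and with them each of the four operators T of the theorem, are scalar (T z = a z) on
  ker Q and leave ran Q invariant. Then |T x|^2 = |a|^2 |x|^2 + g x with a continuous g satisfying
  g (Q x) = g x, and such a g attains its infimum on the unit sphere of every closed subspace M:
  with N = M \<inter> ker Q, the part M \<inter> N^\<bottom> is finite-dimensional because Q is injective on it,
  and g does not see N.\<close>

sublocale complex_vector \<subseteq> cvs: vector_space scaleC
  by unfold_locales
    (simp_all add: complex_vector_class.scaleC_add_right complex_vector_class.scaleC_add_left
      complex_vector_class.scaleC_scaleC complex_vector_class.scaleC_one)

subclass (in chilbert_space) banach ..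

lemma minus_scaleC: "- (x::'a::complex_vector) = (-1) *\<^sub>C x"
  using scaleR_scaleC[of "-1" x] by simp

lemma cinner_add_right: "cinner (x::'a::complex_inner) (y + z) = cinner x y + cinner x z"
  by (simp add: cinner_commute[of x] cinner_add_left)

lemma cinner_scaleC_right: "cinner x (r *\<^sub>C y) = r * cinner x y"
  by (simp add: cinner_commute[of x] cinner_scaleC_left)

lemma cinner_zero_left [simp]: "cinner 0 x = 0"
  using cinner_add_left[of 0 0 x] by simp

lemma cinner_zero_right [simp]: "cinner x 0 = 0"
  using cinner_add_right[of x 0 0] by simp

lemma cinner_minus_left: "cinner (- x) y = - cinner x y"
  by (subst minus_scaleC, subst cinner_scaleC_left) simp

lemma cinner_minus_right: "cinner x (- y) = - cinner x y"
  by (subst minus_scaleC, subst cinner_scaleC_right) simp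

lemma cinner_diff_left: "cinner (x - y) z = cinner x z - cinner y z"
  using cinner_add_left[of x "-y" z] by (simp add: cinner_minus_left)

lemma cinner_diff_right: "cinner x (y - z) = cinner x y - cinner x z"
  using cinner_add_right[of x y "-z"] by (simp add: cinner_minus_right)

lemma cinner_sum_left: "cinner (\<Sum>i\<in>A. f i) y = (\<Sum>i\<in>A. cinner (f i) y)"
  by (induct A rule: infinite_finite_induct) (auto simp: cinner_add_left)

lemma cinner_sum_right: "cinner y (\<Sum>i\<in>A. f i) = (\<Sum>i\<in>A. cinner y (f i))"
  by (induct A rule: infinite_finite_induct) (auto simp: cinner_add_right)

lemma cinner_self_norm: "cinner x x = complex_of_real ((norm x)^2)"
proof -
  have "Im (cinner x x) = 0"
    using arg_cong[OF cinner_commute[of x x], of Im] by simp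
  then show ?thesis
    by (simp add: complex_eq_iff norm_eq_sqrt_cinner cinner_ge_zero)
qed

lemma norm_sq_cinner: "(norm x)^2 = Re (cinner x x)"
  by (simp add: cinner_self_norm)

lemma norm_scaleC: "norm (c *\<^sub>C (x::'a::complex_inner)) = cmod c * norm x"
proof -
  have "(norm (c *\<^sub>C x))^2 = Re (cnj c * c * cinner x x)"
    by (simp add: norm_sq_cinner cinner_scaleC_left cinner_scaleC_right mult.assoc mult.left_commute[of c])
  also have "cnj c * c = complex_of_real ((cmod c)^2)"
    by (subst complex_norm_square) (simp add: mult.commute)
  also have "Re (complex_of_real ((cmod c)^2) * cinner x x) = (cmod c * norm x)^2"
    by (simp add: cinner_self_norm power_mult_distrib)
  finally show ?thesis
    by (rule power2_eq_imp_eq) auto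
qed

lemma norm_normalize: "x \<noteq> 0 \<Longrightarrow> norm (complex_of_real (1 / norm x) *\<^sub>C (x::'a::complex_inner)) = 1"
  by (simp add: norm_scaleC norm_divide)

lemma norm_sq_add: "(norm (x + y))^2 = (norm x)^2 + (norm y)^2 + 2 * Re (cinner x y)"
proof -
  have "Re (cinner y x) = Re (cinner x y)"
    using arg_cong[OF cinner_commute[of y x], of Re] by simp
  then show ?thesis
    by (simp add: norm_sq_cinner cinner_add_left cinner_add_right)
qed

lemma norm_sq_diff: "(norm (x - y))^2 = (norm x)^2 + (norm y)^2 - 2 * Re (cinner x y)"
  using norm_sq_add[of x "-y"] by (simp add: cinner_minus_right)

lemma pythagoras: "cinner x y = 0 \<Longrightarrow> (norm (x + y))^2 = (norm x)^2 + (norm y)^2"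
  by (simp add: norm_sq_add)

lemma parallelogram_law:
  "(norm ((x::'a::complex_inner) + y))^2 + (norm (x - y))^2 = 2 * (norm x)^2 + 2 * (norm y)^2"
  by (simp add: norm_sq_add norm_sq_diff)

lemma cinner_unit_bound:
  assumes e: "norm e = 1"
  shows "cmod (cinner e x) \<le> norm x"
proof -
  define c where "c = cinner e x"
  have "0 \<le> (norm (x - c *\<^sub>C e))^2" by simp
  also have "\<dots> = (norm x)^2 + (cmod c)^2 - 2 * Re (cinner x (c *\<^sub>C e))"
    by (simp add: norm_sq_diff norm_scaleC e)
  also have "cinner x (c *\<^sub>C e) = c * cnj c"
    by (simp add: cinner_scaleC_right c_def cinner_commute[of x e])
  also have "Re (c * cnj c) = (cmod c)^2"
    unfolding complex_norm_square[symmetric] by simp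
  finally have "(cmod c)^2 \<le> (norm x)^2" by simp
  then show ?thesis unfolding c_def by (rule power2_le_imp_le) auto
qed

lemma cauchy_schwarz: "cmod (cinner w x) \<le> norm w * norm x"
proof (cases "w = 0")
  case False
  define u where "u = complex_of_real (1 / norm w) *\<^sub>C w"
  have "w = complex_of_real (norm w) *\<^sub>C u"
    using False by (simp add: u_def scaleC_scaleC)
  then have "cinner w x = norm w * cinner u x"
    by (metis cinner_scaleC_left complex_cnj_complex_of_real)
  then show ?thesis
    using cinner_unit_bound[OF norm_normalize[OF False], folded u_def, of x]
    by (simp add: norm_mult mult_left_mono)
qed simp

lemma bounded_linear_cinner_right: "bounded_linear (\<lambda>y. cinner w y)"
  by (rule bounded_linear_intro[where K="norm w"])
     (auto simp: cinner_add_right scaleR_scaleC cinner_scaleC_right scaleR_conv_of_real,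
      metis cauchy_schwarz mult.commute)

lemma bounded_linear_scaleC_right: "bounded_linear (\<lambda>y::'a::complex_inner. c *\<^sub>C y)"
  by (rule bounded_linear_intro[where K="cmod c"])
     (auto simp: scaleC_add_right scaleR_scaleC scaleC_scaleC norm_scaleC mult.commute)

lemma bounded_linear_scaleC_left: "bounded_linear (\<lambda>z::complex. z *\<^sub>C (a::'a::complex_inner))"
  by (rule bounded_linear_intro[where K="norm a"])
     (auto simp: scaleC_add_left scaleR_scaleC scaleC_scaleC norm_scaleC scaleR_conv_of_real)

lemma closed_cinner_orthogonal: "closed {y. cinner w y = 0}"
  using continuous_closed_preimage_constant[OF linear_continuous_on[OF bounded_linear_cinner_right]
      closed_UNIV, of w 0]
  by simp

lemma clinear_0: "clinear T \<Longrightarrow> T 0 = 0"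
  unfolding clinear_def by (metis add_cancel_right_right)

lemma clinear_add: "clinear T \<Longrightarrow> T (x + y) = T x + T y"
  unfolding clinear_def by blast

lemma clinear_scaleC: "clinear T \<Longrightarrow> T (c *\<^sub>C x) = c *\<^sub>C T x"
  unfolding clinear_def by blast

lemma clinear_diff: "clinear T \<Longrightarrow> T (x - y) = T x - T y"
  using clinear_add[of T x "-y"] clinear_scaleC[of T "-1" y] by (simp add: minus_scaleC[symmetric])

lemma clinear_sum: "clinear T \<Longrightarrow> T (\<Sum>i\<in>A. f i) = (\<Sum>i\<in>A. T (f i))"
  by (induct A rule: infinite_finite_induct) (auto simp: clinear_0 clinear_add)

lemma clinear_id: "clinear (\<lambda>x. x)"
  unfolding clinear_def by simp

lemma clinear_compose: "clinear S \<Longrightarrow> clinear T \<Longrightarrow> clinear (\<lambda>x. S (T x))"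
  unfolding clinear_def by simp

lemma clinear_add_fun: "clinear S \<Longrightarrow> clinear T \<Longrightarrow> clinear (\<lambda>x. S x + T x)"
  unfolding clinear_def by (simp add: scaleC_add_right)

lemma clinear_diff_fun: "clinear S \<Longrightarrow> clinear T \<Longrightarrow> clinear (\<lambda>x. S x - T x)"
  unfolding clinear_def by (simp add: cvs.scale_right_diff_distrib)

lemma bounded_clinear_bounded_linear:
  assumes "bounded_clinear T"
  shows "bounded_linear T"
proof -
  obtain K where l: "clinear T" and K: "\<And>x. norm (T x) \<le> norm x * K"
    using assms unfolding bounded_clinear_def by auto
  show ?thesis
    by (rule bounded_linear_intro[where K=K])
       (use l K in \<open>auto simp: clinear_add scaleR_scaleC clinear_scaleC\<close>)
qed

lemma csubspace_0: "csubspace V \<Longrightarrow> 0 \<in> V"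
  unfolding csubspace_def by auto

lemma csubspace_add: "csubspace V \<Longrightarrow> x \<in> V \<Longrightarrow> y \<in> V \<Longrightarrow> x + y \<in> V"
  unfolding csubspace_def by auto

lemma csubspace_scaleC: "csubspace V \<Longrightarrow> x \<in> V \<Longrightarrow> c *\<^sub>C x \<in> V"
  unfolding csubspace_def by auto

lemma csubspace_diff: "csubspace V \<Longrightarrow> x \<in> V \<Longrightarrow> y \<in> V \<Longrightarrow> x - y \<in> V"
  using csubspace_add[of V x "-y"] csubspace_scaleC[of V y "-1"] by (simp add: minus_scaleC[symmetric])

lemma csubspace_sum: "csubspace V \<Longrightarrow> (\<And>i. i \<in> A \<Longrightarrow> f i \<in> V) \<Longrightarrow> (\<Sum>i\<in>A. f i) \<in> V"
  by (induct A rule: infinite_finite_induct) (auto intro: csubspace_0 csubspace_add)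

lemma csubspace_Int: "csubspace A \<Longrightarrow> csubspace B \<Longrightarrow> csubspace (A \<inter> B)"
  unfolding csubspace_def by auto

lemma csubspace_INT: "(\<And>i. i \<in> I \<Longrightarrow> csubspace (A i)) \<Longrightarrow> csubspace (\<Inter>i\<in>I. A i)"
  unfolding csubspace_def by auto

lemma csubspace_kernel_clinear: "clinear A \<Longrightarrow> csubspace {y. A y = 0}"
  unfolding csubspace_def by (auto simp: clinear_0 clinear_add clinear_scaleC)

lemma csubspace_orthogonal: "csubspace {y. cinner w y = 0}"
  unfolding csubspace_def by (auto simp: cinner_add_right cinner_scaleC_right)

lemma csubspace_normalize:
  "csubspace V \<Longrightarrow> (x::'a::complex_inner) \<in> V \<Longrightarrow> x \<noteq> 0 \<Longrightarrow>
     complex_of_real (1 / norm x) *\<^sub>C x \<in> V \<and> norm (complex_of_real (1 / norm x) *\<^sub>C x) = 1"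
  using csubspace_scaleC[of V x] norm_normalize[of x] by blast

lemma csubspace_unit_vector:
  assumes "csubspace V" "V \<noteq> {0}"
  obtains x :: "'a::complex_inner" where "x \<in> V" "norm x = 1"
proof -
  obtain x where "x \<in> V" "x \<noteq> 0" using assms csubspace_0 by blast
  with that show ?thesis using csubspace_normalize[OF assms(1)] by blast
qed

locale orth_projection =
  fixes P :: "'a::complex_inner \<Rightarrow> 'a"
  assumes orth_proj: "orth_proj P"
begin

lemma bounded_linear: "bounded_linear P"
  using orth_proj bounded_clinear_bounded_linear unfolding orth_proj_def by blast

lemma clinear: "clinear P"
  using orth_proj unfolding orth_proj_def bounded_clinear_def by blast

lemma idem [simp]: "P (P x) = P x"
  using orth_proj unfolding orth_proj_def by blast

lemma selfadjoint: "cinner (P x) y = cinner x (P y)"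
  using orth_proj unfolding orth_proj_def by blast

lemma map_add: "P (x + y) = P x + P y"
  using clinear clinear_add by blast

lemma map_diff: "P (x - y) = P x - P y"
  using clinear clinear_diff by blast

lemma map_scaleC: "P (c *\<^sub>C x) = c *\<^sub>C P x"
  using clinear clinear_scaleC by blast

lemma map_0 [simp]: "P 0 = 0"
  using clinear clinear_0 by blast

lemma continuous: "continuous_on S P"
  using bounded_linear linear_continuous_on by blast

lemma cinner_range_complement: "cinner (P x) (y - P y) = 0"
  by (simp add: cinner_diff_right selfadjoint[symmetric])

lemma cinner_complement_range: "cinner (y - P y) (P x) = 0"
  by (simp add: cinner_diff_left selfadjoint)

lemma cinner_kernel_range: "P x = 0 \<Longrightarrow> P y = y \<Longrightarrow> cinner x y = 0"
  by (metis selfadjoint cinner_zero_left)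

lemma norm_sq_decompose: "(norm x)^2 = (norm (P x))^2 + (norm (x - P x))^2"
  using pythagoras[OF cinner_range_complement[of x x]] by simp

lemma norm_complement_le: "norm (x - P x) \<le> norm x"
  using norm_sq_decompose[of x] by (simp add: power2_le_imp_le)

lemma csubspace_range: "csubspace {x. P x = x}"
  unfolding csubspace_def by (auto simp: map_add map_scaleC)

end

section \<open>Finite orthonormal sets\<close>

definition orthonormal :: "'a::complex_inner set \<Rightarrow> bool" where
  "orthonormal E \<longleftrightarrow> (\<forall>e\<in>E. norm e = 1) \<and> (\<forall>e\<in>E. \<forall>f\<in>E. e \<noteq> f \<longrightarrow> cinner e f = 0)"

definition proj_onto :: "'a::complex_inner set \<Rightarrow> 'a \<Rightarrow> 'a" where
  "proj_onto E x = (\<Sum>e\<in>E. cinner e x *\<^sub>C e)"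

lemma orthonormal_cinner:
  "orthonormal E \<Longrightarrow> e \<in> E \<Longrightarrow> f \<in> E \<Longrightarrow> cinner e f = (if e = f then 1 else 0)"
  unfolding orthonormal_def using cinner_self_norm[of e] by auto

lemma orthonormal_insert:
  assumes "orthonormal S" "norm u = 1" "\<forall>e\<in>S. cinner e u = 0"
  shows "orthonormal (insert u S)"
proof -
  have "cinner u e = 0" if "e \<in> S" for e
    using assms(3) that cinner_commute[of u e] by simp
  then show ?thesis using assms unfolding orthonormal_def by auto
qed

lemma cinner_proj_onto:
  assumes "finite E" "orthonormal E" "f \<in> E"
  shows "cinner f (proj_onto E x) = cinner f x"
proof -
  have "cinner f (proj_onto E x) = (\<Sum>e\<in>E. cinner e x * cinner f e)"
    unfolding proj_onto_def by (simp add: cinner_sum_right cinner_scaleC_right)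
  also have "\<dots> = (\<Sum>e\<in>E. if e = f then cinner f x else 0)"
    by (rule sum.cong) (use assms orthonormal_cinner[of E f] in auto)
  finally show ?thesis using assms by simp
qed

lemma proj_onto_selfadjoint:
  "cinner (proj_onto E x) y = cinner x (proj_onto E y)"
  unfolding proj_onto_def
  by (simp add: cinner_sum_left cinner_sum_right cinner_scaleC_left cinner_scaleC_right
      cinner_commute[of x] mult.commute)

lemma clinear_proj_onto: "clinear (proj_onto E)"
  unfolding clinear_def proj_onto_def
  by (simp add: cinner_add_right cinner_scaleC_right scaleC_add_left sum.distrib
      cvs.scale_sum_right scaleC_scaleC)

lemma proj_onto_idem:
  assumes "finite E" "orthonormal E"
  shows "proj_onto E (proj_onto E x) = proj_onto E x"
  unfolding proj_onto_def[of E "proj_onto E x"] using cinner_proj_onto[OF assms]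
  by (simp add: proj_onto_def)

lemma proj_onto_in_csubspace: "csubspace V \<Longrightarrow> E \<subseteq> V \<Longrightarrow> proj_onto E x \<in> V"
  unfolding proj_onto_def by (rule csubspace_sum) (auto intro: csubspace_scaleC)

lemma orth_proj_proj_onto:
  assumes "finite E" "orthonormal E"
  shows "orth_proj (proj_onto E)"
proof -
  have "norm (proj_onto E x) \<le> norm x * card E" for x
  proof -
    have "norm (proj_onto E x) \<le> (\<Sum>e\<in>E. norm (cinner e x *\<^sub>C e))"
      unfolding proj_onto_def by (rule norm_sum)
    also have "\<dots> \<le> (\<Sum>e\<in>E. norm x)"
      by (rule sum_mono) (use assms cinner_unit_bound in \<open>auto simp: norm_scaleC orthonormal_def\<close>)
    finally show ?thesis by (simp add: mult.commute)
  qed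
  then show ?thesis
    unfolding orth_proj_def bounded_clinear_def
    using clinear_proj_onto proj_onto_idem[OF assms] proj_onto_selfadjoint by blast
qed

lemma orthonormal_extend:
  assumes "finite E" "orthonormal E" and "proj_onto E v \<noteq> v"
  obtains u where "orthonormal (insert u E)" "u \<notin> E"
    and "\<And>V. csubspace V \<Longrightarrow> E \<subseteq> V \<Longrightarrow> v \<in> V \<Longrightarrow> u \<in> V"
    and "proj_onto (insert u E) v = v"
    and "\<And>x. proj_onto E x = x \<Longrightarrow> proj_onto (insert u E) x = x"
proof -
  define w where "w = v - proj_onto E v"
  have w0: "w \<noteq> 0" using assms(3) by (simp add: w_def)
  define u where "u = complex_of_real (1 / norm w) *\<^sub>C w"
  have u1: "norm u = 1" using norm_normalize[OF w0] by (simp add: u_def)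
  have uV: "u \<in> V" if "csubspace V" "E \<subseteq> V" "v \<in> V" for V
    unfolding u_def w_def using that
    by (intro csubspace_scaleC csubspace_diff proj_onto_in_csubspace)
  have uE: "\<forall>e\<in>E. cinner e u = 0"
    using cinner_proj_onto[OF assms(1,2)]
    by (simp add: u_def w_def cinner_scaleC_right cinner_diff_right)
  then have "u \<notin> E" using u1 cinner_self_norm[of u] by force
  have split: "proj_onto (insert u E) x = cinner u x *\<^sub>C u + proj_onto E x" for x
    unfolding proj_onto_def using assms(1) \<open>u \<notin> E\<close> by simp
  have u_perp: "cinner u (proj_onto E x) = 0" for x
    using uE by (simp add: proj_onto_def cinner_sum_right cinner_scaleC_right cinner_commute[of u])
  have "cinner u v = cinner u w"
    using u_perp by (simp add: w_def cinner_diff_right)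
  also have "\<dots> = complex_of_real (norm w)"
    using w0 by (simp add: u_def cinner_scaleC_left cinner_self_norm power2_eq_square)
  finally have "cinner u v *\<^sub>C u = w"
    using w0 by (simp add: u_def scaleC_scaleC)
  then have "proj_onto (insert u E) v = v" by (simp add: split w_def)
  moreover have "proj_onto (insert u E) x = x" if "proj_onto E x = x" for x
    using u_perp[of x] that by (simp add: split)
  ultimately show ?thesis
    using that[OF orthonormal_insert[OF assms(2) u1 uE] \<open>u \<notin> E\<close> uV] by blast
qed

lemma orthonormal_spanning_exists:
  fixes B :: "'a::complex_inner set"
  assumes "finite B"
  shows "\<exists>F. finite F \<and> orthonormal F \<and> (\<forall>b\<in>B. proj_onto F b = b)"
  using assms
proof (induct B rule: finite_induct)
  case empty
  show ?case by (intro exI[of _ "{}"]) (simp add: orthonormal_def)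
next
  case (insert b B)
  then obtain F where F: "finite F" "orthonormal F" "\<forall>b\<in>B. proj_onto F b = b" by blast
  show ?case
  proof (cases "proj_onto F b = b")
    case False
    with orthonormal_extend[OF F(1,2)] obtain u where
      "orthonormal (insert u F)" "proj_onto (insert u F) b = b"
      "\<And>x. proj_onto F x = x \<Longrightarrow> proj_onto (insert u F) x = x"
      by metis
    then show ?thesis using F by (intro exI[of _ "insert u F"]) auto
  qed (use F in auto)
qed

lemma orthonormal_independent:
  assumes "orthonormal V"
  shows "cvs.independent V"
proof
  assume "cvs.dependent V"
  then obtain t u w where t: "finite t" "t \<subseteq> V" "(\<Sum>v\<in>t. u v *\<^sub>C v) = 0" and w: "w \<in> t" "u w \<noteq> 0"
    unfolding cvs.dependent_explicit by blast
  have "0 = cinner w (\<Sum>v\<in>t. u v *\<^sub>C v)" using t(3) by simp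
  also have "\<dots> = (\<Sum>v\<in>t. if v = w then u w else 0)"
    unfolding cinner_sum_right cinner_scaleC_right
  proof (rule sum.cong)
    fix x assume "x \<in> t"
    then have "x \<in> V" "w \<in> V" using t(2) w(1) by auto
    then show "u x * cinner w x = (if x = w then u w else 0)"
      using orthonormal_cinner[OF assms, of w x] by auto
  qed simp
  also have "\<dots> = u w" using t(1) w(1) by simp
  finally show False using w(2) by simp
qed

definition orthonormal_seq :: "(nat \<Rightarrow> 'a::complex_inner) \<Rightarrow> bool" where
  "orthonormal_seq e \<longleftrightarrow> (\<forall>n. norm (e n) = 1) \<and> (\<forall>m n. m \<noteq> n \<longrightarrow> cinner (e m) (e n) = 0)"

lemma orthonormal_seq_cinner:
  "orthonormal_seq e \<Longrightarrow> cinner (e m) (e n) = (if m = n then 1 else 0)"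
  unfolding orthonormal_seq_def by (auto simp: cinner_self_norm)

lemma orthonormal_seq_inj: "orthonormal_seq e \<Longrightarrow> inj e"
  by (rule injI) (metis orthonormal_seq_cinner zero_neq_one)

lemma orthonormal_seq_image: "orthonormal_seq e \<Longrightarrow> orthonormal (e ` A)"
  unfolding orthonormal_seq_def orthonormal_def by (metis imageE)

lemma orthonormal_seq_if_extendable:
  assumes extend: "\<And>S. finite S \<Longrightarrow> S \<subseteq> V \<Longrightarrow> orthonormal S \<Longrightarrow>
      \<exists>u. u \<in> V \<and> u \<notin> S \<and> orthonormal (insert u S)"
  shows "\<exists>e. orthonormal_seq e \<and> range e \<subseteq> V"
proof -
  obtain g where g: "\<And>S. finite S \<Longrightarrow> S \<subseteq> V \<Longrightarrow> orthonormal S \<Longrightarrow>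
      g S \<in> V \<and> g S \<notin> S \<and> orthonormal (insert (g S) S)"
    using extend choice[of "\<lambda>S u. finite S \<and> S \<subseteq> V \<and> orthonormal S \<longrightarrow>
      u \<in> V \<and> u \<notin> S \<and> orthonormal (insert u S)"] by blast
  txt \<open>L n is the set of the first n vectors chosen greedily.\<close>
  define L where "L = rec_nat {} (\<lambda>_ S. insert (g S) S)"
  have L_simps: "L 0 = {}" "L (Suc n) = insert (g (L n)) (L n)" for n
    by (simp_all add: L_def)
  have L: "finite (L n) \<and> L n \<subseteq> V \<and> orthonormal (L n)" for n
  proof (induct n)
    case (Suc n)
    then show ?case using g[of "L n"] by (simp add: L_simps)
  qed (simp add: L_simps orthonormal_def)
  define e where "e n = g (L n)" for n
  have e: "e n \<in> V" "e n \<notin> L n" "orthonormal (insert (e n) (L n))" for n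
    using g L unfolding e_def by blast+
  have e_L: "m < n \<Longrightarrow> e m \<in> L n" for m n
    by (induct n) (auto simp: L_simps e_def less_Suc_eq)
  have e_orth: "cinner (e m) (e n) = 0" if "m < n" for m n
  proof -
    have "e m \<in> insert (e n) (L n)" "e m \<noteq> e n" using e_L[OF that] e(2)[of n] by auto
    then show ?thesis using e(3)[of n] unfolding orthonormal_def by blast
  qed
  have "orthonormal_seq e"
    unfolding orthonormal_seq_def
  proof (intro conjI allI impI)
    show "norm (e n) = 1" for n using e(3)[of n] unfolding orthonormal_def by blast
    fix m n :: nat assume "m \<noteq> n"
    then consider "m < n" | "n < m" by linarith
    then show "cinner (e m) (e n) = 0"
      by cases (use e_orth cinner_commute[of "e m" "e n"] in auto)
  qed
  with e(1) show ?thesis by blast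
qed

lemma csubspace_orthonormal_seq_or_finite:
  assumes V: "csubspace V"
  shows "(\<exists>e. orthonormal_seq e \<and> range e \<subseteq> V)
    \<or> (\<exists>S. finite S \<and> S \<subseteq> V \<and> orthonormal S \<and> (\<forall>v\<in>V. proj_onto S v = v))"
proof (rule disjCI)
  assume not_spanned: "\<not> (\<exists>S. finite S \<and> S \<subseteq> V \<and> orthonormal S \<and> (\<forall>v\<in>V. proj_onto S v = v))"
  show "\<exists>e. orthonormal_seq e \<and> range e \<subseteq> V"
  proof (rule orthonormal_seq_if_extendable)
    fix S assume S: "finite S" "S \<subseteq> V" "orthonormal S"
    then obtain v where "v \<in> V" "proj_onto S v \<noteq> v" using not_spanned by blast
    then obtain u where "orthonormal (insert u S)" "u \<notin> S" "u \<in> V"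
      using orthonormal_extend[of S v] S V by metis
    then show "\<exists>u. u \<in> V \<and> u \<notin> S \<and> orthonormal (insert u S)" by blast
  qed
qed

text \<open>Dimension count: Q maps span (v ` {..card F}) injectively into span F.\<close>

lemma infinite_dim_meets_kernel:
  assumes F: "finite F" and W: "csubspace W" and v: "orthonormal_seq v" "range v \<subseteq> W"
  shows "\<exists>w\<in>W. w \<noteq> 0 \<and> proj_onto F w = 0"
proof (rule ccontr)
  assume no_kernel: "\<not> ?thesis"
  have inj_W: "inj_on (proj_onto F) W"
  proof (rule inj_onI)
    fix x y assume xy: "x \<in> W" "y \<in> W" "proj_onto F x = proj_onto F y"
    then have "proj_onto F (x - y) = 0" by (simp add: clinear_diff[OF clinear_proj_onto])
    then show "x = y" using no_kernel csubspace_diff[OF W xy(1,2)] by auto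
  qed
  define V where "V = v ` {..card F}"
  have VW: "V \<subseteq> W" using v(2) by (auto simp: V_def)
  have "cvs.subspace W" using W unfolding csubspace_def cvs.subspace_def by simp
  then have "cvs.span V \<subseteq> W" using VW by (rule cvs.span_minimal[rotated])
  moreover have "module_hom scaleC scaleC (proj_onto F :: 'a \<Rightarrow> 'a)"
    by unfold_locales (simp_all add: clinear_add[OF clinear_proj_onto]
        clinear_scaleC[OF clinear_proj_onto] scaleC_add_right scaleC_add_left scaleC_scaleC)
  ultimately have "cvs.independent (proj_onto F ` V)"
    using module_hom.independent_injective_image inj_on_subset[OF inj_W]
      orthonormal_independent[OF orthonormal_seq_image[OF v(1)]]
    unfolding V_def by blast
  moreover have "proj_onto F ` V \<subseteq> cvs.span F"
    unfolding proj_onto_def by (intro image_subsetI cvs.span_sum cvs.span_scale cvs.span_base)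
  ultimately have "card (proj_onto F ` V) \<le> card F"
    using cvs.independent_span_bound[OF F] by blast
  moreover have "card (proj_onto F ` V) = card V"
    by (rule card_image[OF inj_on_subset[OF inj_W VW]])
  moreover have "card V = Suc (card F)"
    unfolding V_def using card_image[OF inj_on_subset[OF orthonormal_seq_inj[OF v(1)]]] by simp
  ultimately show False by simp
qed

lemma csubspace_finite_dim_if_inj_on:
  assumes "finite F" "csubspace W" and inj: "\<And>w. w \<in> W \<Longrightarrow> proj_onto F w = 0 \<Longrightarrow> w = 0"
  shows "\<exists>E. finite E \<and> orthonormal E \<and> (\<forall>w\<in>W. proj_onto E w = w)"
  using csubspace_orthonormal_seq_or_finite[OF assms(2)] infinite_dim_meets_kernel[OF assms(1,2)] inj
  by blast

definition unit_combinations :: "'a::complex_vector set \<Rightarrow> 'a set" where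
  "unit_combinations E = {(\<Sum>e\<in>E. c e *\<^sub>C e) | c. \<forall>e\<in>E. cmod (c e) \<le> 1}"

lemma unit_combinations_insert:
  assumes "finite E" "a \<notin> E"
  shows "unit_combinations (insert a E) = (\<lambda>p. fst p *\<^sub>C a + snd p) ` (cball 0 1 \<times> unit_combinations E)"
proof (intro equalityI subsetI)
  fix x assume "x \<in> unit_combinations (insert a E)"
  then obtain c where c: "x = (\<Sum>e\<in>insert a E. c e *\<^sub>C e)" "\<forall>e\<in>insert a E. cmod (c e) \<le> 1"
    by (auto simp: unit_combinations_def)
  then have "(c a, \<Sum>e\<in>E. c e *\<^sub>C e) \<in> cball 0 1 \<times> unit_combinations E"
    by (auto simp: unit_combinations_def)
  then show "x \<in> (\<lambda>p. fst p *\<^sub>C a + snd p) ` (cball 0 1 \<times> unit_combinations E)"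
    using c(1) assms by force
next
  fix x assume "x \<in> (\<lambda>p. fst p *\<^sub>C a + snd p) ` (cball 0 1 \<times> unit_combinations E)"
  then obtain z c where zc: "cmod z \<le> 1" "\<forall>e\<in>E. cmod (c e) \<le> 1"
    "x = z *\<^sub>C a + (\<Sum>e\<in>E. c e *\<^sub>C e)"
    by (auto simp: unit_combinations_def)
  have "(\<Sum>e\<in>E. (c(a := z)) e *\<^sub>C e) = (\<Sum>e\<in>E. c e *\<^sub>C e)"
    by (rule sum.cong) (use assms in auto)
  then have "x = (\<Sum>e\<in>insert a E. (c(a := z)) e *\<^sub>C e)" using zc(3) assms by simp
  then show "x \<in> unit_combinations (insert a E)"
    unfolding unit_combinations_def using zc by (intro CollectI exI[of _ "c(a := z)"] conjI) auto
qed

lemma compact_unit_combinations: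
  fixes E :: "'a::complex_inner set"
  assumes "finite E"
  shows "compact (unit_combinations E)"
  using assms
proof (induct E rule: finite_induct)
  case empty
  have "unit_combinations ({}::'a set) = {0}" by (auto simp: unit_combinations_def)
  then show ?case by simp
next
  case (insert a E)
  have "continuous_on (cball 0 1 \<times> unit_combinations E) (\<lambda>p. fst p *\<^sub>C a + snd p)"
    by (intro continuous_intros
        linear_continuous_on[OF bounded_linear_scaleC_left, THEN continuous_on_compose2]) auto
  then show ?case unfolding unit_combinations_insert[OF insert(1,2)]
    by (rule compact_continuous_image) (intro compact_Times compact_cball insert(3))
qed

lemma compact_Int_cball_if_spanned:
  fixes W :: "'a::complex_inner set"
  assumes E: "finite E" "orthonormal E" and W: "closed W" "\<forall>w\<in>W. proj_onto E w = w"
  shows "compact (W \<inter> cball 0 1)"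
proof -
  have "W \<inter> cball 0 1 \<subseteq> unit_combinations E"
  proof
    fix x assume x: "x \<in> W \<inter> cball 0 1"
    have "cmod (cinner e x) \<le> 1" if "e \<in> E" for e
      using cinner_unit_bound[of e x] that x E(2) by (auto simp: orthonormal_def)
    moreover have "x = (\<Sum>e\<in>E. cinner e x *\<^sub>C e)"
      using x W(2) by (simp add: proj_onto_def)
    ultimately show "x \<in> unit_combinations E"
      unfolding unit_combinations_def by (intro CollectI exI[of _ "\<lambda>e. cinner e x"] conjI) auto
  qed
  then have "W \<inter> cball 0 1 = unit_combinations E \<inter> (W \<inter> cball 0 1)" by blast
  then show ?thesis
    by (metis compact_Int_closed compact_unit_combinations E(1) W(1) closed_Int closed_cball)
qed

section \<open>Orthogonal decomposition\<close>

lemma dist_sq_le_of_near_minimal: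
  fixes N :: "'a::complex_inner set"
  assumes N: "csubspace N" and d: "0 \<le> d" "\<forall>m\<in>N. d \<le> norm (v - m)"
    and x: "x \<in> N" and y: "y \<in> N"
  shows "(norm (x - y))^2 \<le> 2 * ((norm (v - x))^2 - d^2) + 2 * ((norm (v - y))^2 - d^2)"
proof -
  have "(1/2::real) *\<^sub>R (x + y) \<in> N"
    unfolding scaleR_scaleC by (intro csubspace_scaleC N csubspace_add x y)
  moreover have "(v - x) + (v - y) = 2 *\<^sub>R (v - (1/2::real) *\<^sub>R (x + y))"
    by (simp add: algebra_simps scaleR_2)
  ultimately have "2 * d \<le> norm ((v - x) + (v - y))"
    using d(2) by fastforce
  then have "(2 * d)^2 \<le> (norm ((v - x) + (v - y)))^2"
    by (rule power_mono) (use d(1) in simp)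
  moreover have "(norm (x - y))^2 = 2 * (norm (v - x))^2 + 2 * (norm (v - y))^2
      - (norm ((v - x) + (v - y)))^2"
    using parallelogram_law[of "v - x" "v - y"] by (simp add: norm_minus_commute)
  ultimately show ?thesis by (simp add: power_mult_distrib)
qed

lemma Cauchy_minimizing_seq:
  fixes N :: "'a::complex_inner set"
  assumes N: "csubspace N" and d: "0 \<le> d" "\<forall>m\<in>N. d \<le> norm (v - m)"
    and m: "\<And>k. m k \<in> N" "\<And>k. (norm (v - m k))^2 < d^2 + inverse (real (Suc k))"
  shows "Cauchy m"
proof (rule CauchyI)
  fix e :: real assume e: "0 < e"
  then obtain K where K: "inverse (real (Suc K)) < e^2 / 4"
    using reals_Archimedean[of "e^2 / 4"] by auto
  have "norm (m p - m q) < e" if "K \<le> p" "K \<le> q" for p q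
  proof -
    have "inverse (real (Suc p)) \<le> inverse (real (Suc K))"
      "inverse (real (Suc q)) \<le> inverse (real (Suc K))"
      using that by (auto simp: field_simps)
    then have "(norm (m p - m q))^2 < e^2"
      using dist_sq_le_of_near_minimal[OF N d m(1)[of p] m(1)[of q]] m(2)[of p] m(2)[of q] K
      by argo
    then show ?thesis by (rule power_less_imp_less_base) (use e in simp)
  qed
  then show "\<exists>M. \<forall>p\<ge>M. \<forall>q\<ge>M. norm (m p - m q) < e" by blast
qed

lemma closest_point_exists:
  fixes N :: "'a::chilbert_space set"
  assumes N: "csubspace N" "closed N"
  shows "\<exists>n\<in>N. \<forall>m\<in>N. norm (v - n) \<le> norm (v - m)"
proof -
  define D where "D = (\<lambda>m. norm (v - m)) ` N"
  define d where "d = Inf D"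
  have D: "D \<noteq> {}" "bdd_below D"
    using csubspace_0[OF N(1)] by (auto simp: D_def intro: bdd_belowI[of _ 0])
  have dle: "\<forall>m\<in>N. d \<le> norm (v - m)"
    unfolding d_def using D by (auto simp: D_def intro: cInf_lower)
  have d0: "0 \<le> d" unfolding d_def by (rule cInf_greatest[OF D(1)]) (auto simp: D_def)
  have "\<exists>m. m \<in> N \<and> (norm (v - m))^2 < d^2 + inverse (real (Suc k))" for k
  proof -
    have "d < sqrt (d^2 + inverse (real (Suc k)))"
      using d0 by (simp add: real_less_rsqrt)
    then obtain m where m: "m \<in> N" "norm (v - m) < sqrt (d^2 + inverse (real (Suc k)))"
      using cInf_lessD[OF D(1)] unfolding d_def D_def by blast
    then have "(norm (v - m))^2 < (sqrt (d^2 + inverse (real (Suc k))))^2"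
      by (intro power_strict_mono) auto
    then show ?thesis using m(1) by (intro exI[of _ m]) simp
  qed
  then obtain m where m: "\<And>k. m k \<in> N" "\<And>k. (norm (v - m k))^2 < d^2 + inverse (real (Suc k))"
    using choice[of "\<lambda>k m. m \<in> N \<and> (norm (v - m))^2 < d^2 + inverse (real (Suc k))"] by blast
  obtain n where n: "m \<longlonglongrightarrow> n"
    using Cauchy_convergent[OF Cauchy_minimizing_seq[OF N(1) d0 dle m]] convergent_def by blast
  have "(norm (v - n))^2 \<le> d^2"
  proof (rule LIMSEQ_le)
    show "(\<lambda>k. (norm (v - m k))^2) \<longlonglongrightarrow> (norm (v - n))^2"
      by (intro tendsto_intros n)
    show "(\<lambda>k. d^2 + inverse (real (Suc k))) \<longlonglongrightarrow> d^2"
      using tendsto_add[OF tendsto_const LIMSEQ_inverse_real_of_nat, of "d^2"] by simp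
    show "\<exists>N. \<forall>k\<ge>N. (norm (v - m k))^2 \<le> d^2 + inverse (real (Suc k))"
      using m(2) less_imp_le by blast
  qed
  then have "norm (v - n) \<le> d" using d0 by (rule power2_le_imp_le)
  then show ?thesis using closed_sequentially[OF N(2) m(1) n] dle by force
qed

lemma closest_point_orthogonal:
  fixes N :: "'a::complex_inner set"
  assumes N: "csubspace N" and n: "n \<in> N" "\<And>m. m \<in> N \<Longrightarrow> norm (v - n) \<le> norm (v - m)"
    and m: "m \<in> N"
  shows "cinner m (v - n) = 0"
proof (rule ccontr)
  define z where "z = v - n"
  define a where "a = cinner m z"
  assume "cinner m (v - n) \<noteq> 0"
  then have a0: "a \<noteq> 0" by (simp add: a_def z_def)
  define r where "r = (norm m)^2"
  define s where "s = 1 / (r + 1)"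
  have r0: "0 \<le> r" by (simp add: r_def)
  then have s0: "0 < s" by (simp add: s_def)
  define w where "w = (complex_of_real s * a) *\<^sub>C m"
  text \<open>Moving n by a small multiple of m in the direction of z would get closer to v.\<close>
  have "n + w \<in> N" unfolding w_def by (intro csubspace_add N n csubspace_scaleC m)
  then have "norm z \<le> norm (z - w)" using n(2)[of "n + w"] by (simp add: z_def algebra_simps)
  then have "(norm z)^2 \<le> (norm (z - w))^2" by (rule power_mono) simp
  also have "(norm (z - w))^2 = (norm z)^2 + (norm w)^2 - 2 * Re (cinner z w)" by (rule norm_sq_diff)
  also have "cinner z w = complex_of_real s * (a * cnj a)"
    by (simp add: w_def cinner_scaleC_right a_def cinner_commute[of z m] mult.assoc)
  also have "a * cnj a = complex_of_real ((cmod a)^2)" by (rule complex_norm_square[symmetric])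
  also have "(norm w)^2 = s^2 * (cmod a)^2 * r"
    by (simp add: w_def norm_scaleC norm_mult r_def power_mult_distrib abs_of_pos s0)
  finally have "0 \<le> s * (cmod a)^2 * (s * r - 2)"
    by (simp add: power2_eq_square algebra_simps)
  moreover have "0 < s * (cmod a)^2" using s0 a0 by simp
  ultimately have "2 \<le> s * r" by (simp add: zero_le_mult_iff)
  moreover have "s * r < 1" using r0 by (simp add: s_def)
  ultimately show False by simp
qed

lemma orthogonal_decomposition:
  fixes N :: "'a::chilbert_space set"
  assumes "csubspace N" "closed N"
  obtains n where "n \<in> N" "\<And>m. m \<in> N \<Longrightarrow> cinner m (v - n) = 0" "norm (v - n) \<le> norm v"
proof -
  obtain n where n: "n \<in> N" "\<And>m. m \<in> N \<Longrightarrow> norm (v - n) \<le> norm (v - m)"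
    using closest_point_exists[OF assms, of v] by blast
  moreover have "norm (v - n) \<le> norm v"
    using n(2)[OF csubspace_0[OF assms(1)]] by simp
  ultimately show ?thesis
    using that closest_point_orthogonal[OF assms(1)] by blast
qed

section \<open>Projections with property AN* have finite rank or finite corank\<close>

lemma min_modulus_on_nonneg:
  assumes "x \<in> M" "norm x = 1"
  shows "0 \<le> min_modulus_on T M"
  unfolding min_modulus_on_def by (rule cInf_greatest) (use assms in auto)

lemma min_modulus_on_le:
  assumes "x \<in> M" "norm x = 1"
  shows "min_modulus_on T M \<le> norm (T x)"
  unfolding min_modulus_on_def by (rule cInf_lower) (use assms in \<open>auto intro: bdd_belowI[of _ 0]\<close>)

lemma min_modulus_on_eq_0:
  assumes u: "\<And>k. u k \<in> M" "\<And>k. norm (u k) = 1" and bound: "\<And>k. norm (T (u k)) \<le> c k"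
    and c: "c \<longlonglongrightarrow> 0"
  shows "min_modulus_on T M = 0"
proof -
  have "min_modulus_on T M \<le> 0"
    using min_modulus_on_le[OF u] bound by (intro LIMSEQ_le_const[OF c]) (blast intro: order.trans)
  then show ?thesis using min_modulus_on_nonneg[OF u(1)[of 0] u(2)[of 0], of T] by simp
qed

definition diag_op :: "(nat \<Rightarrow> 'a::complex_inner) \<Rightarrow> (nat \<Rightarrow> 'a) \<Rightarrow> 'a \<Rightarrow> 'a" where
  "diag_op e f z = (\<Sum>n. (complex_of_real ((1/2)^n) * cinner (f n) z) *\<^sub>C e n)"

context
  fixes e f :: "nat \<Rightarrow> 'a::chilbert_space"
  assumes e: "orthonormal_seq e" and f: "orthonormal_seq f"
begin

private lemma norm_diag_op_term:
  "norm ((complex_of_real ((1/2)^n) * cinner (f n) z) *\<^sub>C e n) \<le> (1/2)^n * norm z"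
  using e f cinner_unit_bound[of "f n" z]
  by (simp add: orthonormal_seq_def norm_scaleC norm_mult norm_power mult_left_mono)

private lemma summable_diag_op_term:
  "summable (\<lambda>n. (complex_of_real ((1/2)^n) * cinner (f n) z) *\<^sub>C e n)"
  by (rule summable_comparison_test[OF _ summable_mult2[OF summable_geometric, of "1/2" "norm z"]])
     (use norm_diag_op_term in auto)

lemma clinear_diag_op: "clinear (diag_op e f)"
proof -
  have "diag_op e f (x + y) = diag_op e f x + diag_op e f y" for x y
    unfolding diag_op_def suminf_add[OF summable_diag_op_term summable_diag_op_term]
    by (simp add: cinner_add_right distrib_left scaleC_add_left)
  moreover have "diag_op e f (a *\<^sub>C x) = a *\<^sub>C diag_op e f x" for a x
    unfolding diag_op_def
    using bounded_linear.suminf[OF bounded_linear_scaleC_right summable_diag_op_term, of a x]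
    by (simp add: cinner_scaleC_right scaleC_scaleC mult_ac)
  ultimately show ?thesis unfolding clinear_def by blast
qed

lemma bounded_linear_diag_op: "bounded_linear (diag_op e f)"
proof (rule bounded_linear_intro[where K=2])
  show "norm (diag_op e f z) \<le> norm z * 2" for z
  proof -
    have "norm (diag_op e f z) \<le> (\<Sum>n. (1/2)^n * norm z)"
      unfolding diag_op_def
      by (rule norm_suminf_le[OF norm_diag_op_term summable_mult2[OF summable_geometric]]) simp
    also have "\<dots> = 2 * norm z"
      using suminf_mult2[OF summable_geometric, of "1/2::real" "norm z"] suminf_geometric[of "1/2::real"]
      by simp
    finally show ?thesis by simp
  qed
qed (use clinear_diag_op in \<open>auto simp: clinear_def scaleR_scaleC\<close>)

lemma cinner_diag_op: "cinner (e k) (diag_op e f z) = complex_of_real ((1/2)^k) * cinner (f k) z"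
proof -
  have "cinner (e k) (diag_op e f z)
      = (\<Sum>n. cinner (e k) ((complex_of_real ((1/2)^n) * cinner (f n) z) *\<^sub>C e n))"
    unfolding diag_op_def using bounded_linear.suminf[OF bounded_linear_cinner_right summable_diag_op_term]
    by simp
  also have "(\<lambda>n. cinner (e k) ((complex_of_real ((1/2)^n) * cinner (f n) z) *\<^sub>C e n))
      = (\<lambda>n. if n = k then complex_of_real ((1/2)^k) * cinner (f k) z else 0)"
    by (auto simp: cinner_scaleC_right orthonormal_seq_cinner[OF e])
  finally show ?thesis
    using sums_single[of k "\<lambda>_. complex_of_real ((1/2)^k) * cinner (f k) z"] by (simp add: sums_iff)
qed

lemma diag_op_apply: "diag_op e f (f k) = complex_of_real ((1/2)^k) *\<^sub>C e k"
proof -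
  have "(\<lambda>n. (complex_of_real ((1/2)^n) * cinner (f n) (f k)) *\<^sub>C e n)
      = (\<lambda>n. if n = k then complex_of_real ((1/2)^k) *\<^sub>C e k else 0)"
    by (auto simp: orthonormal_seq_cinner[OF f])
  then show ?thesis
    unfolding diag_op_def
    using sums_single[of k "\<lambda>_. complex_of_real ((1/2)^k) *\<^sub>C e k"] by (simp add: sums_iff)
qed

end

locale infinite_rank_and_corank = orth_projection P for P :: "'a::chilbert_space \<Rightarrow> 'a" +
  fixes e f :: "nat \<Rightarrow> 'a"
  assumes e: "orthonormal_seq e" "\<And>n. P (e n) = e n"
    and f: "orthonormal_seq f" "\<And>n. P (f n) = 0"
begin

definition kernel_part :: "'a set" where
  "kernel_part = {w. P w = 0 \<and> (\<forall>n. cinner (f n) w = 0)}"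

definition test_space :: "'a set" where
  "test_space = {y. P y - diag_op e f (y - P y) = 0} \<inter> (\<Inter>w\<in>kernel_part. {y. cinner w y = 0})"

definition test_vector :: "nat \<Rightarrow> 'a" where
  "test_vector k = complex_of_real ((1/2)^k) *\<^sub>C e k + f k"

lemma norm_e: "norm (e n) = 1" and norm_f: "norm (f n) = 1"
  using e(1) f(1) unfolding orthonormal_seq_def by blast+

lemma closed_test_space: "closed test_space"
proof -
  have "continuous_on UNIV (\<lambda>y. P y - diag_op e f (y - P y))"
    by (intro continuous_intros continuous
        linear_continuous_on[OF bounded_linear_diag_op[OF e(1) f(1)], THEN continuous_on_compose2])
      auto
  from continuous_closed_preimage_constant[OF this closed_UNIV, of 0]
  have "closed {y. P y - diag_op e f (y - P y) = 0}" by simp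
  then show ?thesis unfolding test_space_def
    by (intro closed_Int closed_INT ballI closed_cinner_orthogonal)
qed

lemma csubspace_test_space: "csubspace test_space"
proof -
  have "csubspace {y. P y - diag_op e f (y - P y) = 0}"
    by (rule csubspace_kernel_clinear)
       (intro clinear_diff_fun clinear clinear_compose[OF clinear_diag_op[OF e(1) f(1)]] clinear_id)
  then show ?thesis unfolding test_space_def
    by (intro csubspace_Int csubspace_INT csubspace_orthogonal)
qed

lemma P_test_vector: "P (test_vector k) = complex_of_real ((1/2)^k) *\<^sub>C e k"
  by (simp add: test_vector_def map_add map_scaleC e(2) f(2))

lemma one_le_norm_test_vector: "1 \<le> norm (test_vector k)"
  using norm_complement_le[of "test_vector k"] unfolding P_test_vector
  by (simp add: test_vector_def norm_f)

lemma test_vector_in_test_space: "test_vector k \<in> test_space"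
proof -
  have "P (test_vector k) - diag_op e f (test_vector k - P (test_vector k)) = 0"
    unfolding P_test_vector by (simp add: test_vector_def diag_op_apply[OF e(1) f(1)])
  moreover have "cinner w (test_vector k) = 0" if "w \<in> kernel_part" for w
  proof -
    have "cinner w (e k) = 0"
      using that cinner_kernel_range[of w "e k"] e(2) by (simp add: kernel_part_def)
    moreover have "cinner w (f k) = 0"
      using that cinner_commute[of w "f k"] by (simp add: kernel_part_def)
    ultimately show ?thesis by (simp add: test_vector_def cinner_add_right cinner_scaleC_right)
  qed
  ultimately show ?thesis unfolding test_space_def by blast
qed

lemma min_modulus_test_space: "min_modulus_on P test_space = 0"
proof -
  define u where "u k = complex_of_real (1 / norm (test_vector k)) *\<^sub>C test_vector k" for k
  have "test_vector k \<noteq> 0" for k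
    using one_le_norm_test_vector[of k] by auto
  then have u: "u k \<in> test_space" "norm (u k) = 1" for k
    using csubspace_normalize[OF csubspace_test_space test_vector_in_test_space] unfolding u_def
    by blast+
  have "norm (P (u k)) \<le> (1/2)^k" for k
  proof -
    have "norm (P (u k)) = (1/2)^k / norm (test_vector k)"
      by (simp add: u_def map_scaleC P_test_vector norm_scaleC norm_divide norm_e norm_power)
    also have "\<dots> \<le> (1/2)^k"
      using one_le_norm_test_vector[of k] by (simp add: divide_le_eq)
    finally show ?thesis .
  qed
  then show ?thesis
    by (rule min_modulus_on_eq_0[OF u]) (rule LIMSEQ_realpow_zero, simp_all)
qed

lemma test_space_kernel: "x \<in> test_space \<Longrightarrow> P x = 0 \<Longrightarrow> x = 0"
proof -
  assume x: "x \<in> test_space" "P x = 0"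
  then have "diag_op e f x = 0" by (simp add: test_space_def)
  then have "cinner (f n) x = 0" for n
    using cinner_diag_op[OF e(1) f(1), of n x] by simp
  then have "x \<in> kernel_part" using x(2) by (simp add: kernel_part_def)
  then have "cinner x x = 0" using x(1) by (simp add: test_space_def)
  then show "x = 0" by (simp add: cinner_eq_zero_iff)
qed

lemma not_AN_star: "\<not> property_AN_star P"
proof
  assume an: "property_AN_star P"
  have "test_vector 0 \<noteq> 0"
    using one_le_norm_test_vector[of 0] by auto
  then have "test_space \<noteq> {0}"
    using test_vector_in_test_space[of 0] by blast
  then have "property_N_star_on P test_space"
    using an csubspace_test_space closed_test_space by (simp add: property_AN_star_def)
  then obtain x where x: "x \<in> test_space" "norm x = 1" "norm (P x) = 0"
    unfolding property_N_star_on_def min_modulus_test_space by blast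
  then have "x = 0" using test_space_kernel[of x] by simp
  with x(2) show False by simp
qed

end

lemma orth_proj_complement:
  assumes "orth_proj P"
  shows "orth_proj (\<lambda>x. x - P x)"
proof -
  interpret orth_projection P using assms by unfold_locales
  have "clinear (\<lambda>x. x - P x)"
    by (intro clinear_diff_fun clinear_id clinear)
  moreover have "\<exists>K. \<forall>x. norm (x - P x) \<le> norm x * K"
    using norm_complement_le by (intro exI[of _ 1]) simp
  ultimately show ?thesis
    unfolding orth_proj_def bounded_clinear_def
    by (simp add: map_diff cinner_diff_left cinner_diff_right selfadjoint)
qed

lemma orth_proj_finite_rank:
  fixes P :: "'a::chilbert_space \<Rightarrow> 'a"
  assumes P: "orth_proj P" and no_seq: "\<nexists>e. orthonormal_seq e \<and> range e \<subseteq> {x. P x = x}"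
  shows "\<exists>S. finite S \<and> orthonormal S \<and> P = proj_onto S"
proof -
  interpret orth_projection P using P by unfold_locales
  obtain S where S: "finite S" "orthonormal S" "S \<subseteq> {x. P x = x}"
    "\<forall>v\<in>{x. P x = x}. proj_onto S v = v"
    using csubspace_orthonormal_seq_or_finite[OF csubspace_range] no_seq by blast
  have "P x = proj_onto S x" for x
  proof -
    have "cinner e (P x) = cinner e x" if "e \<in> S" for e
      using S(3) that selfadjoint[of e x] by auto
    then have "proj_onto S (P x) = proj_onto S x" unfolding proj_onto_def by simp
    then show ?thesis using S(4) by simp
  qed
  then show ?thesis using S(1,2) by blast
qed

lemma AN_star_proj_finite_rank_or_corank:
  fixes P :: "'a::chilbert_space \<Rightarrow> 'a"
  assumes P: "orth_proj P" and an: "property_AN_star P"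
  shows "\<exists>S. finite S \<and> orthonormal S \<and> (P = proj_onto S \<or> P = (\<lambda>x. x - proj_onto S x))"
proof (cases "\<exists>e. orthonormal_seq e \<and> range e \<subseteq> {x. P x = x}")
  case True
  then obtain e where e: "orthonormal_seq e" "range e \<subseteq> {x. P x = x}" by blast
  have "\<nexists>f. orthonormal_seq f \<and> range f \<subseteq> {x. x - P x = x}"
  proof
    assume "\<exists>f. orthonormal_seq f \<and> range f \<subseteq> {x. x - P x = x}"
    then obtain f where f: "orthonormal_seq f" "\<And>n. P (f n) = 0" by auto
    have "\<And>n. P (e n) = e n" using e(2) by auto
    with P e(1) f interpret infinite_rank_and_corank P e f
      by (simp add: infinite_rank_and_corank_def infinite_rank_and_corank_axioms_def orth_projection_def)
    show False using not_AN_star an by blast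
  qed
  then obtain S where S: "finite S" "orthonormal S" "(\<lambda>x. x - P x) = proj_onto S"
    using orth_proj_finite_rank[OF orth_proj_complement[OF P]] by blast
  have "P x = x - proj_onto S x" for x
    using fun_cong[OF S(3), of x] by (simp add: algebra_simps)
  with S(1,2) show ?thesis by blast
next
  case False
  then show ?thesis using orth_proj_finite_rank[OF P] by blast
qed

section \<open>Operators that are scalar off a finite-dimensional range\<close>

lemma property_N_star_onI:
  assumes "x0 \<in> M" "norm x0 = 1" "\<And>x. x \<in> M \<Longrightarrow> norm x = 1 \<Longrightarrow> norm (T x0) \<le> norm (T x)"
  shows "property_N_star_on T M"
proof -
  have "norm (T x0) \<le> min_modulus_on T M"
    unfolding min_modulus_on_def by (rule cInf_greatest) (use assms in auto)
  then show ?thesis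
    unfolding property_N_star_on_def using assms(1,2) min_modulus_on_le[OF assms(1,2), of T] by force
qed

lemma norm_add_orthogonal_unit:
  assumes "cinner w z = 0" "norm w \<le> 1" "norm z = 1"
  shows "norm (w + complex_of_real (sqrt (1 - (norm w)^2)) *\<^sub>C z) = 1"
proof -
  define s where "s = sqrt (1 - (norm w)^2)"
  have s2: "s^2 = 1 - (norm w)^2"
    unfolding s_def using assms(2) by (simp add: power_le_one)
  have "cinner w (complex_of_real s *\<^sub>C z) = 0"
    using assms(1) by (simp add: cinner_scaleC_right)
  then have "(norm (w + complex_of_real s *\<^sub>C z))^2 = (norm w)^2 + (norm (complex_of_real s *\<^sub>C z))^2"
    by (rule pythagoras)
  also have "(norm (complex_of_real s *\<^sub>C z))^2 = s^2"
    by (simp add: norm_scaleC assms(3))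
  finally have "(norm (w + complex_of_real s *\<^sub>C z))^2 = 1^2"
    using s2 by simp
  then show ?thesis unfolding s_def by (rule power2_eq_imp_eq) simp_all
qed

lemma compact_Int_cball_if_inj:
  fixes W :: "'a::chilbert_space set"
  assumes "finite F" "csubspace W" "closed W" and "\<And>w. w \<in> W \<Longrightarrow> proj_onto F w = 0 \<Longrightarrow> w = 0"
  shows "compact (W \<inter> cball 0 1)"
  using csubspace_finite_dim_if_inj_on[OF assms(1,2,4)] compact_Int_cball_if_spanned assms(3)
  by blast

lemma attains_inf_on_ball_if_inj:
  fixes W :: "'a::chilbert_space set" and g :: "'a \<Rightarrow> real"
  assumes W: "finite F" "csubspace W" "closed W" "\<And>w. w \<in> W \<Longrightarrow> proj_onto F w = 0 \<Longrightarrow> w = 0"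
    and g: "continuous_on UNIV g"
  obtains w0 where "w0 \<in> W" "norm w0 \<le> 1" "\<And>w. w \<in> W \<Longrightarrow> norm w \<le> 1 \<Longrightarrow> g w0 \<le> g w"
proof -
  have "0 \<in> W \<inter> cball 0 1" using csubspace_0[OF W(2)] by simp
  then have "W \<inter> cball 0 1 \<noteq> {}" by blast
  from continuous_attains_inf[OF compact_Int_cball_if_inj[OF W] this
      continuous_on_subset[OF g subset_UNIV]]
  obtain w0 where "w0 \<in> W \<inter> cball 0 1" "\<forall>w\<in>W \<inter> cball 0 1. g w0 \<le> g w"
    by blast
  then have "w0 \<in> W" "norm w0 \<le> 1" "\<And>w. w \<in> W \<Longrightarrow> norm w \<le> 1 \<Longrightarrow> g w0 \<le> g w"
    by (simp_all add: mem_cball_0)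
  then show ?thesis by (rule that)
qed

lemma attains_inf_on_sphere_if_inj:
  fixes M :: "'a::chilbert_space set" and g :: "'a \<Rightarrow> real"
  assumes M: "finite F" "csubspace M" "closed M" "\<And>w. w \<in> M \<Longrightarrow> proj_onto F w = 0 \<Longrightarrow> w = 0"
    and "M \<noteq> {0}" and g: "continuous_on UNIV g"
  obtains x0 where "x0 \<in> M" "norm x0 = 1" "\<And>x. x \<in> M \<Longrightarrow> norm x = 1 \<Longrightarrow> g x0 \<le> g x"
proof -
  have "closed {x::'a. norm x = 1}"
    using continuous_closed_preimage_constant[OF continuous_on_norm_id closed_UNIV, of 1] by simp
  with compact_Int_cball_if_inj[OF M] have "compact (M \<inter> cball 0 1 \<inter> {x. norm x = 1})"
    by (rule compact_Int_closed)
  moreover obtain u where "u \<in> M" "norm u = 1"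
    using csubspace_unit_vector[OF M(2) \<open>M \<noteq> {0}\<close>] by blast
  then have "M \<inter> cball 0 1 \<inter> {x. norm x = 1} \<noteq> {}" by auto
  ultimately obtain x0 where "x0 \<in> M \<inter> cball 0 1 \<inter> {x. norm x = 1}"
    "\<forall>x\<in>M \<inter> cball 0 1 \<inter> {x. norm x = 1}. g x0 \<le> g x"
    using continuous_attains_inf[OF _ _ continuous_on_subset[OF g subset_UNIV]] by blast
  then have "x0 \<in> M" "norm x0 = 1" "\<And>x. x \<in> M \<Longrightarrow> norm x = 1 \<Longrightarrow> g x0 \<le> g x"
    by simp_all
  then show ?thesis by (rule that)
qed

lemma closed_csubspace_kernel_part:
  assumes F: "finite F" "orthonormal F" and M: "csubspace M" "closed M"
  shows "csubspace (M \<inter> {x. proj_onto F x = 0})" "closed (M \<inter> {x. proj_onto F x = 0})"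
proof -
  interpret Q: orth_projection "proj_onto F" using orth_proj_proj_onto[OF F] by unfold_locales
  show "csubspace (M \<inter> {x. proj_onto F x = 0})"
    by (intro csubspace_Int M(1) csubspace_kernel_clinear clinear_proj_onto)
  have "closed {x. proj_onto F x = 0}"
    using continuous_closed_preimage_constant[OF Q.continuous closed_UNIV, of 0] by simp
  then show "closed (M \<inter> {x. proj_onto F x = 0})" by (intro closed_Int M(2))
qed

lemma closed_csubspace_orthogonal_part:
  assumes M: "csubspace M" "closed M"
  shows "csubspace (M \<inter> (\<Inter>n\<in>N. {y. cinner n y = 0}))" "closed (M \<inter> (\<Inter>n\<in>N. {y. cinner n y = 0}))"
  by (intro csubspace_Int M(1) csubspace_INT csubspace_orthogonal)
     (intro closed_Int M(2) closed_INT ballI closed_cinner_orthogonal)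

text \<open>With N = M \<inter> ker Q, which g does not see, the minimum over the unit ball of the
  finite-dimensional part W = M \<inter> N^\<bottom> is lifted to the unit sphere of M by adding a vector of N.\<close>

lemma attains_inf_on_sphere_if_meets_kernel:
  fixes M :: "'a::chilbert_space set" and g :: "'a \<Rightarrow> real"
  assumes F: "finite F" "orthonormal F" and M: "csubspace M" "closed M"
    and z: "z \<in> M" "proj_onto F z = 0" "norm z = 1"
    and g: "continuous_on UNIV g" "\<And>x. g (proj_onto F x) = g x"
  shows "\<exists>x0\<in>M. norm x0 = 1 \<and> (\<forall>x\<in>M. norm x = 1 \<longrightarrow> g x0 \<le> g x)"
proof -
  interpret Q: orth_projection "proj_onto F" using orth_proj_proj_onto[OF F] by unfold_locales
  define N where "N = M \<inter> {x. proj_onto F x = 0}"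
  define W where "W = M \<inter> (\<Inter>n\<in>N. {y. cinner n y = 0})"
  note N = closed_csubspace_kernel_part[OF F M, folded N_def]
  note W = closed_csubspace_orthogonal_part[OF M, of N, folded W_def]
  have "w = 0" if "w \<in> W" "proj_onto F w = 0" for w
    using that cinner_eq_zero_iff[of w] by (auto simp: W_def N_def)
  then obtain w0 where w0: "w0 \<in> W" "norm w0 \<le> 1"
    and w0_min: "\<And>w. w \<in> W \<Longrightarrow> norm w \<le> 1 \<Longrightarrow> g w0 \<le> g w"
    using attains_inf_on_ball_if_inj[OF F(1) W _ g(1)] by metis
  define x0 where "x0 = w0 + complex_of_real (sqrt (1 - (norm w0)^2)) *\<^sub>C z"
  have "cinner w0 z = 0"
    using w0(1) z(1,2) cinner_commute[of w0 z] by (auto simp: W_def N_def)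
  then have "norm x0 = 1"
    unfolding x0_def using w0(2) z(3) by (rule norm_add_orthogonal_unit)
  moreover have "x0 \<in> M"
    unfolding x0_def using w0(1) z(1) by (intro csubspace_add[OF M(1)] csubspace_scaleC[OF M(1)]) (auto simp: W_def)
  moreover have "g x0 = g w0"
    using g(2)[of x0] g(2)[of w0] z(2) by (simp add: x0_def Q.map_add Q.map_scaleC)
  moreover have "g w0 \<le> g x" if x: "x \<in> M" "norm x = 1" for x
  proof -
    obtain n where n: "n \<in> N" "\<And>m. m \<in> N \<Longrightarrow> cinner m (x - n) = 0" "norm (x - n) \<le> norm x"
      using orthogonal_decomposition[OF N] by blast
    have "x - n \<in> W"
      unfolding W_def using n x(1) csubspace_diff[OF M(1), of x n] by (auto simp: N_def)
    then have "g w0 \<le> g (x - n)" using w0_min n(3) x(2) by simp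
    also have "g (x - n) = g x"
      using g(2)[of x] g(2)[of "x - n"] n(1) by (simp add: N_def Q.map_diff)
    finally show ?thesis .
  qed
  ultimately show ?thesis by auto
qed

lemma attains_inf_on_sphere:
  fixes M :: "'a::chilbert_space set" and g :: "'a \<Rightarrow> real"
  assumes F: "finite F" "orthonormal F" and M: "csubspace M" "closed M" "M \<noteq> {0}"
    and g: "continuous_on UNIV g" "\<And>x. g (proj_onto F x) = g x"
  shows "\<exists>x0\<in>M. norm x0 = 1 \<and> (\<forall>x\<in>M. norm x = 1 \<longrightarrow> g x0 \<le> g x)"
proof (cases "M \<inter> {x. proj_onto F x = 0} = {0}")
  case True
  then have "w = 0" if "w \<in> M" "proj_onto F w = 0" for w
    using that by blast
  with attains_inf_on_sphere_if_inj[OF F(1) M(1,2) _ M(3) g(1)] show ?thesis by metis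
next
  case False
  then obtain z where "z \<in> M" "proj_onto F z = 0" "norm z = 1"
    using csubspace_unit_vector[OF closed_csubspace_kernel_part(1)[OF F M(1,2)]] by blast
  then show ?thesis by (rule attains_inf_on_sphere_if_meets_kernel[OF F M(1,2) _ _ _ g])
qed

definition scalar_off_range :: "('a::complex_inner \<Rightarrow> 'a) \<Rightarrow> ('a \<Rightarrow> 'a) \<Rightarrow> complex \<Rightarrow> bool" where
  "scalar_off_range Q T a \<longleftrightarrow> (\<forall>z. Q z = 0 \<longrightarrow> T z = a *\<^sub>C z) \<and> (\<forall>y. Q y = y \<longrightarrow> Q (T y) = T y)"

lemma scalar_off_range_add:
  "clinear Q \<Longrightarrow> scalar_off_range Q S a \<Longrightarrow> scalar_off_range Q T b
    \<Longrightarrow> scalar_off_range Q (\<lambda>x. S x + T x) (a + b)"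
  unfolding scalar_off_range_def by (simp add: clinear_add scaleC_add_left)

lemma scalar_off_range_diff:
  "clinear Q \<Longrightarrow> scalar_off_range Q S a \<Longrightarrow> scalar_off_range Q T b
    \<Longrightarrow> scalar_off_range Q (\<lambda>x. S x - T x) (a - b)"
  unfolding scalar_off_range_def by (simp add: clinear_diff cvs.scale_left_diff_distrib)

lemma scalar_off_range_comp:
  "clinear Q \<Longrightarrow> clinear S \<Longrightarrow> scalar_off_range Q S a \<Longrightarrow> scalar_off_range Q T b
    \<Longrightarrow> scalar_off_range Q (S \<circ> T) (a * b)"
  unfolding scalar_off_range_def by (simp add: clinear_scaleC scaleC_scaleC mult.commute)

lemma scalar_off_range_proj_onto:
  assumes F: "finite F" "orthonormal F" and S: "finite S" "orthonormal S" "\<forall>e\<in>S. proj_onto F e = e"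
    and P: "P = proj_onto S \<or> P = (\<lambda>x. x - proj_onto S x)"
  shows "\<exists>a. scalar_off_range (proj_onto F) P a"
proof -
  have kernel: "proj_onto S z = 0" if "proj_onto F z = 0" for z
  proof -
    have "cinner e z = 0" if "e \<in> S" for e
      using proj_onto_selfadjoint[of F e z] S(3) that \<open>proj_onto F z = 0\<close> by simp
    then show ?thesis unfolding proj_onto_def by simp
  qed
  have range: "proj_onto F (proj_onto S x) = proj_onto S x" for x
    unfolding proj_onto_def[of S] using S(3)
    by (simp add: clinear_sum[OF clinear_proj_onto] clinear_scaleC[OF clinear_proj_onto])
  interpret Q: orth_projection "proj_onto F" using orth_proj_proj_onto[OF F] by unfold_locales
  from P have "scalar_off_range (proj_onto F) P 0 \<or> scalar_off_range (proj_onto F) P 1"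
    unfolding scalar_off_range_def using kernel range by (auto simp: Q.map_diff)
  then show ?thesis by blast
qed

text \<open>For T scalar a off the range of Q, the two summands of
  T x = a (x - Q x) + T (Q x) are orthogonal.\<close>

lemma norm_sq_scalar_off_range:
  assumes F: "finite F" "orthonormal F" and T: "scalar_off_range (proj_onto F) T a" "clinear T"
  shows "(norm (T x))^2 = (cmod a)^2 * (norm x)^2
    + ((norm (T (proj_onto F x)))^2 - (cmod a)^2 * (norm (proj_onto F x))^2)"
proof -
  interpret Q: orth_projection "proj_onto F" using orth_proj_proj_onto[OF F] by unfold_locales
  let ?Q = "proj_onto F"
  have "T (x - ?Q x) = a *\<^sub>C (x - ?Q x)" "?Q (T (?Q x)) = T (?Q x)"
    using T(1) unfolding scalar_off_range_def by (simp_all add: Q.map_diff)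
  moreover have "T x = T (x - ?Q x) + T (?Q x)"
    using clinear_diff[OF T(2), of x "?Q x"] by simp
  ultimately have Tx: "T x = a *\<^sub>C (x - ?Q x) + T (?Q x)"
    and orth: "cinner (a *\<^sub>C (x - ?Q x)) (T (?Q x)) = 0"
    using Q.cinner_complement_range[of x "T (?Q x)"] by (simp_all add: cinner_scaleC_left)
  have "(norm (T x))^2 = (cmod a)^2 * (norm (x - ?Q x))^2 + (norm (T (?Q x)))^2"
    unfolding Tx pythagoras[OF orth] by (simp add: norm_scaleC power_mult_distrib)
  then show ?thesis
    using Q.norm_sq_decompose[of x] by (simp add: algebra_simps)
qed

lemma scalar_off_range_AN_star:
  fixes T :: "'a::chilbert_space \<Rightarrow> 'a"
  assumes F: "finite F" "orthonormal F" and T: "scalar_off_range (proj_onto F) T a"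
    and "clinear T" "bounded_linear T"
  shows "property_AN_star T"
  unfolding property_AN_star_def
proof (intro allI impI)
  fix M :: "'a set" assume M: "csubspace M \<and> closed M \<and> M \<noteq> {0}"
  interpret Q: orth_projection "proj_onto F" using orth_proj_proj_onto[OF F] by unfold_locales
  define g where "g x = (norm (T (proj_onto F x)))^2 - (cmod a)^2 * (norm (proj_onto F x))^2" for x
  have "continuous_on UNIV g"
    unfolding g_def
    by (intro continuous_intros Q.continuous
        linear_continuous_on[OF \<open>bounded_linear T\<close>, THEN continuous_on_compose2]) auto
  moreover have "g (proj_onto F x) = g x" for x
    by (simp add: g_def proj_onto_idem[OF F])
  ultimately obtain x0 where x0: "x0 \<in> M" "norm x0 = 1" "\<forall>x\<in>M. norm x = 1 \<longrightarrow> g x0 \<le> g x"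
    using attains_inf_on_sphere[OF F] M by blast
  have key: "(norm (T x))^2 = (cmod a)^2 * (norm x)^2 + g x" for x
    unfolding g_def by (rule norm_sq_scalar_off_range[OF F T \<open>clinear T\<close>])
  show "property_N_star_on T M"
  proof (rule property_N_star_onI[OF x0(1,2)])
    fix x assume "x \<in> M" "norm x = 1"
    then have "(norm (T x0))^2 \<le> (norm (T x))^2" using key[of x0] key[of x] x0 by simp
    then show "norm (T x0) \<le> norm (T x)" by (rule power2_le_imp_le) simp
  qed
qed

lemma AN_star_projs_scalar_off_common_range:
  fixes P1 P2 :: "'a::chilbert_space \<Rightarrow> 'a"
  assumes "orth_proj P1" "orth_proj P2" "property_AN_star P1" "property_AN_star P2"
  obtains F a1 a2 where "finite F" "orthonormal F"
    "scalar_off_range (proj_onto F) P1 a1" "scalar_off_range (proj_onto F) P2 a2"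
proof -
  obtain S1 where S1: "finite S1" "orthonormal S1" "P1 = proj_onto S1 \<or> P1 = (\<lambda>x. x - proj_onto S1 x)"
    using AN_star_proj_finite_rank_or_corank[OF assms(1,3)] by blast
  obtain S2 where S2: "finite S2" "orthonormal S2" "P2 = proj_onto S2 \<or> P2 = (\<lambda>x. x - proj_onto S2 x)"
    using AN_star_proj_finite_rank_or_corank[OF assms(2,4)] by blast
  obtain F where F: "finite F" "orthonormal F" "\<forall>b\<in>S1 \<union> S2. proj_onto F b = b"
    using orthonormal_spanning_exists[of "S1 \<union> S2"] S1(1) S2(1) by blast
  then show ?thesis
    using that scalar_off_range_proj_onto[OF F(1,2) S1(1,2) _ S1(3)]
      scalar_off_range_proj_onto[OF F(1,2) S2(1,2) _ S2(3)] by blast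
qed

theorem proposition3p13:
  fixes P1 P2 :: "'a::chilbert_space \<Rightarrow> 'a"
  assumes "orth_proj P1" and "orth_proj P2"
    and "property_AN_star P1" and "property_AN_star P2"
  shows "property_AN_star (\<lambda>x. P1 x + P2 x) \<and> property_AN_star (\<lambda>x. P1 x - P2 x)
    \<and> property_AN_star (P1 \<circ> P2) \<and> property_AN_star (P2 \<circ> P1)"
proof -
  interpret P1: orth_projection P1 using assms(1) by unfold_locales
  interpret P2: orth_projection P2 using assms(2) by unfold_locales
  obtain F a1 a2 where F: "finite F" "orthonormal F"
    and a1: "scalar_off_range (proj_onto F) P1 a1" and a2: "scalar_off_range (proj_onto F) P2 a2"
    using AN_star_projs_scalar_off_common_range[OF assms] by blast
  note Q = clinear_proj_onto[of F]
  note AN_star = scalar_off_range_AN_star[OF F]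
  note linear = P1.clinear P2.clinear P1.bounded_linear P2.bounded_linear
  show ?thesis
  proof (intro conjI)
    show "property_AN_star (\<lambda>x. P1 x + P2 x)"
      by (rule AN_star[OF scalar_off_range_add[OF Q a1 a2]])
         (simp_all add: linear clinear_add_fun bounded_linear_add)
    show "property_AN_star (\<lambda>x. P1 x - P2 x)"
      by (rule AN_star[OF scalar_off_range_diff[OF Q a1 a2]])
         (simp_all add: linear clinear_diff_fun bounded_linear_sub)
    show "property_AN_star (P1 \<circ> P2)"
      by (rule AN_star[OF scalar_off_range_comp[OF Q P1.clinear a1 a2]])
         (simp_all add: linear comp_def clinear_compose bounded_linear_compose)
    show "property_AN_star (P2 \<circ> P1)"
      by (rule AN_star[OF scalar_off_range_comp[OF Q P2.clinear a2 a1]])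
         (simp_all add: linear comp_def clinear_compose bounded_linear_compose)
  qed
qed

end
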